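(* In the semi-discrete heat setting described in the context, the map $\Lambda_h:\mathcal{W}_h\to\mathcal{F}(\mathring\Omega_h)$, $\varphi\mapsto u_\varphi(T)$, is Fréchet-differentiable at $0$.
   Context: Let $h>0$, integers $M,N\ge2$, grid $\Omega_h=\{(ih,jh):0\le i\le M,0\le j\le N\}$ with nodes indexed $(i,j)$, interior $\mathring\Omega_h=\{1\le i\le M-1,1\le j\le N-1\}$, $\Gamma^1=\{(1,j):1\le j\le N-1\}$; $\mathcal{F}(\mathring\Omega_h)$ is the space of real functions on $\mathring\Omega_h$, extended by $0$ on boundary nodes. $\mathcal{W}_h$ is the set of perturbations $\varphi(t)=\sum_{j=1}^{N-1}h\lambda_j(t)V_j$ ($V_j$ the unit horizontal vector at boundary node $(0,j)$, zero elsewhere) with $\lambda_j\in L^\infty(\mathbb{R}^+)\cap C(\mathbb{R}^+)$, $\sup_j\|\lambda_j\|_\infty<1/2$. $A(\varphi)$ is the 5-point operator $[A(\varphi)\phi]_{(i,j)}=h^{-2}(4\phi_{(i,j)}-\phi_{(i+1,j)}-\phi_{(i-1,j)}-\phi_{(i,j+1)}-\phi_{(i,j-1)})$ off $\Gamma^1$, and $[A(\varphi)\phi]_{(1,j)}=h^{-2}\big(2(1+\frac{1}{1+\lambda_j(t)})\phi_{(1,j)}-\frac{2}{2+\lambda_j(t)}\phi_{(2,j)}-\phi_{(1,j+1)}-\phi_{(1,j-1)}\big)$. Given a source $F:[0,\infty)\to\mathcal{F}(\mathring\Omega_h)$ and $u_0\in\mathcal{F}(\mathring\Omega_h)$, $u_\varphi$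 solves $\partial_tu_\varphi+A(\varphi)u_\varphi=F$, $u_\varphi(0)=u_0$, and $T>0$ is fixed. *)

theory Defs
  imports "HOL-Analysis.Analysis"
begin

definition interior :: "nat \<Rightarrow> nat \<Rightarrow> (nat \<times> nat) set" where
  "interior M N = {(i,j). 1 \<le> i \<and> i \<le> M - 1 \<and> 1 \<le> j \<and> j \<le> N - 1}"

definition ext0 :: "nat \<Rightarrow> nat \<Rightarrow> (nat \<times> nat \<Rightarrow> real) \<Rightarrow> nat \<times> nat \<Rightarrow> real" where
  "ext0 M N v p = (if p \<in> interior M N then v p else 0)"

text \<open>The perturbed 5-point operator A(\<phi>) at time t; \<phi> is given by the family
  lam j t = \<lambda>_j(t), j = 1..N-1.\<close>
definition Aop :: "real \<Rightarrow> nat \<Rightarrow> nat \<Rightarrow> (nat \<Rightarrow> real \<Rightarrow> real) \<Rightarrow> real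
                   \<Rightarrow> (nat \<times> nat \<Rightarrow> real) \<Rightarrow> nat \<times> nat \<Rightarrow> real" where
  "Aop h M N lam t v p =
     (let i = fst p; j = snd p; w = ext0 M N v in
      if i = 1 then
        (2 * (1 + 1 / (1 + lam j t)) * w (1, j) - 2 / (2 + lam j t) * w (2, j)
          - w (1, j + 1) - w (1, j - 1)) / h\<^sup>2
      else
        (4 * w (i, j) - w (i + 1, j) - w (i - 1, j) - w (i, j + 1) - w (i, j - 1)) / h\<^sup>2)"

definition pspace :: "nat \<Rightarrow> (nat \<Rightarrow> real \<Rightarrow> real) set" where
  "pspace N = {lam. \<forall>j\<in>{1..N-1}. continuous_on {0..} (lam j) \<and> bounded (lam j ` {0..})}"

definition pnorm :: "nat \<Rightarrow> (nat \<Rightarrow> real \<Rightarrow> real) \<Rightarrow> real" where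
  "pnorm N lam = Max ((\<lambda>j. SUP t\<in>{0::real..}. \<bar>lam j t\<bar>) ` {1..N-1})"

definition Wh :: "nat \<Rightarrow> (nat \<Rightarrow> real \<Rightarrow> real) set" where
  "Wh N = {lam \<in> pspace N. pnorm N lam < 1/2}"

definition solves :: "real \<Rightarrow> nat \<Rightarrow> nat \<Rightarrow> (real \<Rightarrow> nat \<times> nat \<Rightarrow> real) \<Rightarrow> (nat \<times> nat \<Rightarrow> real)
                      \<Rightarrow> (nat \<Rightarrow> real \<Rightarrow> real) \<Rightarrow> (real \<Rightarrow> nat \<times> nat \<Rightarrow> real) \<Rightarrow> bool" where
  "solves h M N F u0 lam u \<longleftrightarrow>
     (\<forall>p\<in>interior M N. u 0 p = u0 p \<and>
        (\<forall>t\<ge>0. ((\<lambda>s. u s p) has_real_derivative (F t p - Aop h M N lam t (u t) p)) (at t within {0..})))"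

end

theory Submission
  imports Defs
begin

text \<open>
  Write \<open>\<Phi>\<^sub>p(\<lambda>) = u\<^sub>\<lambda>(T,p) - u\<^sub>0(T,p)\<close>. The perturbation changes \<open>A\<close> only on the column
  \<open>\<Gamma>\<^sup>1\<close>, by a boundary term whose coefficients are smooth in \<open>\<lambda>\<^sub>j\<close>. An energy estimate
  (Gronwall for \<open>\<Sum> w\<^sup>2\<close>, using that \<open>\<langle>w, A(\<mu>) w\<rangle> \<ge> -30 h\<^sup>-\<^sup>2 \<parallel>w\<parallel>\<^sup>2\<close> for \<open>\<bar>\<mu>\<bar> \<le> 1/2\<close>)
  gives \<open>u\<^sub>\<lambda> - u\<^sub>0 = O(\<parallel>\<lambda>\<parallel>)\<close>, hence the boundary term equals its linearisation in \<open>\<lambda>\<close>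
  up to \<open>O(\<parallel>\<lambda>\<parallel>\<^sup>2)\<close>. For a combination with \<open>\<Sum> c\<^sub>i \<lambda>\<^sub>i = 0\<close> the linear parts cancel,
  and the energy estimate yields \<open>\<bar>\<Sum> c\<^sub>i \<Phi>\<^sub>p(\<lambda>\<^sub>i)\<bar> \<le> K \<Sum> \<bar>c\<^sub>i\<bar> \<parallel>\<lambda>\<^sub>i\<parallel>\<^sup>2\<close>.
  Any \<open>\<Phi>\<close> with this quadratic defect and \<open>\<Phi>(\<lambda>) = O(\<parallel>\<lambda>\<parallel>)\<close> is differentiable at \<open>0\<close>:
  \<open>n \<Phi>(\<lambda>/n)\<close> is Cauchy, its limit \<open>L \<lambda>\<close> is linear and bounded, and
  \<open>\<bar>\<Phi>(\<lambda>) - L \<lambda>\<bar> \<le> 2K \<parallel>\<lambda>\<parallel>\<^sup>2\<close>.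
\<close>

section \<open>The perturbed five-point operator\<close>

lemma Aop_lincomb3:
  "Aop h M N lam t (\<lambda>q. a * u q + b * v q + c * w q) p
     = a * Aop h M N lam t u p + b * Aop h M N lam t v p + c * Aop h M N lam t w p"
  by (simp add: Aop_def Let_def ext0_def add_divide_distrib diff_divide_distrib algebra_simps)

lemma Aop_diff: "Aop h M N lam t (\<lambda>q. v q - w q) p = Aop h M N lam t v p - Aop h M N lam t w p"
  using Aop_lincomb3[of h M N lam t 1 v "-1" w 0 w p] by simp

definition boundary_term :: "real \<Rightarrow> nat \<Rightarrow> nat \<Rightarrow> (nat \<Rightarrow> real \<Rightarrow> real) \<Rightarrow> real
                   \<Rightarrow> (nat \<times> nat \<Rightarrow> real) \<Rightarrow> nat \<times> nat \<Rightarrow> real" where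
  "boundary_term h M N lam t v p =
     (if fst p = 1 then
        ((2 / (1 + lam (snd p) t) - 2) * ext0 M N v (1, snd p)
          - (2 / (2 + lam (snd p) t) - 1) * ext0 M N v (2, snd p)) / h\<^sup>2
      else 0)"

lemma Aop_eq_Aop_zero_plus_boundary_term:
  "Aop h M N lam t v p = Aop h M N (\<lambda>_ _. 0) t v p + boundary_term h M N lam t v p"
proof (cases "fst p = 1")
  case True
  \<comment> \<open>the west neighbour of a node on \<open>\<Gamma>\<^sup>1\<close> lies on the boundary\<close>
  have "ext0 M N v (0, snd p) = 0" by (simp add: ext0_def interior_def)
  with True show ?thesis
    by (simp add: Aop_def Let_def boundary_term_def add_divide_distrib[symmetric] algebra_simps)
qed (simp add: Aop_def Let_def boundary_term_def)

lemma finite_interior: "finite (interior M N)"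
  by (rule finite_subset[of _ "{0..M} \<times> {0..N}"]) (auto simp: interior_def)

definition east :: "nat \<times> nat \<Rightarrow> nat \<times> nat" where "east p = (fst p + 1, snd p)"
definition west :: "nat \<times> nat \<Rightarrow> nat \<times> nat" where "west p = (fst p - 1, snd p)"
definition north :: "nat \<times> nat \<Rightarrow> nat \<times> nat" where "north p = (fst p, snd p + 1)"
definition south :: "nat \<times> nat \<Rightarrow> nat \<times> nat" where "south p = (fst p, snd p - 1)"

lemma inj_on_neighbours:
  "inj_on east (interior M N)" "inj_on west (interior M N)"
  "inj_on north (interior M N)" "inj_on south (interior M N)"
  by (auto simp: inj_on_def east_def west_def north_def south_def interior_def prod_eq_iff)

lemma sum_shifted_squares_le:
  assumes "inj_on \<sigma> (interior M N)"
  shows "(\<Sum>p\<in>interior M N. (ext0 M N v (\<sigma> p))\<^sup>2) \<le> (\<Sum>p\<in>interior M N. (v p)\<^sup>2)"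
proof -
  let ?I = "interior M N"
  have "(\<Sum>p\<in>?I. (ext0 M N v (\<sigma> p))\<^sup>2) = (\<Sum>q\<in>\<sigma> ` ?I. (ext0 M N v q)\<^sup>2)"
    by (simp add: sum.reindex[OF assms])
  also have "\<dots> = (\<Sum>q\<in>\<sigma> ` ?I \<inter> ?I. (v q)\<^sup>2)"
    by (rule sum.mono_neutral_cong_right) (auto simp: ext0_def finite_interior)
  also have "\<dots> \<le> (\<Sum>q\<in>?I. (v q)\<^sup>2)"
    by (rule sum_mono2) (auto simp: finite_interior)
  finally show ?thesis .
qed

lemma abs_diff4_le: "\<bar>a - b - c - d\<bar> \<le> \<bar>a\<bar> + \<bar>b\<bar> + \<bar>c\<bar> + \<bar>(d::real)\<bar>"
  by linarith

lemma perturbed_coeffs_le: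
  fixes x :: real
  assumes "\<bar>x\<bar> \<le> 1/2"
  shows "\<bar>2 * (1 + 1 / (1 + x))\<bar> \<le> 6" "\<bar>2 / (2 + x)\<bar> \<le> 6"
  using assms by (auto simp: abs_le_iff divide_le_eq)

lemma Aop_abs_le_neighbours:
  fixes M N :: nat and v :: "nat \<times> nat \<Rightarrow> real"
  assumes "h > 0" and "\<bar>lam (snd p) t\<bar> \<le> 1/2"
  defines "w \<equiv> ext0 M N v"
  shows "\<bar>Aop h M N lam t v p\<bar>
           \<le> 6 / h\<^sup>2 * (\<bar>w p\<bar> + \<bar>w (east p)\<bar> + \<bar>w (west p)\<bar> + \<bar>w (north p)\<bar> + \<bar>w (south p)\<bar>)"
proof -
  obtain i j where p: "p = (i, j)" by (cases p)
  have "\<bar>h\<^sup>2 * Aop h M N lam t v p\<bar>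
          \<le> 6 * (\<bar>w p\<bar> + \<bar>w (east p)\<bar> + \<bar>w (west p)\<bar> + \<bar>w (north p)\<bar> + \<bar>w (south p)\<bar>)"
  proof (cases "i = 1")
    case True
    define c1 where "c1 = 2 * (1 + 1 / (1 + lam j t))"
    define c2 where "c2 = 2 / (2 + lam j t)"
    have "\<bar>c1\<bar> \<le> 6" "\<bar>c2\<bar> \<le> 6"
      using perturbed_coeffs_le assms(2) p by (auto simp: c1_def c2_def)
    then have "\<bar>c1 * w (1, j)\<bar> \<le> 6 * \<bar>w (1, j)\<bar>" "\<bar>c2 * w (2, j)\<bar> \<le> 6 * \<bar>w (2, j)\<bar>"
      by (simp_all add: abs_mult mult_right_mono)
    moreover have "h\<^sup>2 * Aop h M N lam t v p = c1 * w (1, j) - c2 * w (2, j) - w (1, j + 1) - w (1, j - 1)"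
      using True p assms(1) by (simp add: Aop_def Let_def c1_def c2_def w_def)
    moreover note abs_diff4_le[of "c1 * w (1, j)" "c2 * w (2, j)" "w (1, j + 1)" "w (1, j - 1)"]
    ultimately show ?thesis
      using True p abs_ge_zero[of "w (0, j)"]
      by (simp add: east_def west_def north_def south_def numeral_2_eq_2) (smt (verit))
  next
    case False
    then have "h\<^sup>2 * Aop h M N lam t v p
        = 4 * w (i, j) - w (i + 1, j) - w (i - 1, j) - w (i, j + 1) - w (i, j - 1)"
      using p assms(1) by (simp add: Aop_def Let_def w_def)
    then show ?thesis
      using p by (simp add: east_def west_def north_def south_def) (smt (verit))
  qed
  then show ?thesis
    using assms(1) by (simp add: abs_mult pos_le_divide_eq mult.commute)
qed

lemma mult_sum5_le_squares:
  fixes x a b c d :: real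
  shows "2 * (x * (x + a + b + c + d)) \<le> 6 * x\<^sup>2 + a\<^sup>2 + b\<^sup>2 + c\<^sup>2 + d\<^sup>2"
  using sum_squares_bound[of x a] sum_squares_bound[of x b]
    sum_squares_bound[of x c] sum_squares_bound[of x d]
  by (simp add: algebra_simps power2_eq_square)

lemma Aop_quadratic_form_ge:
  assumes h: "h > 0" and lam: "\<forall>j\<in>{1..N-1}. \<bar>lam j t\<bar> \<le> 1/2"
  shows "(\<Sum>p\<in>interior M N. v p * Aop h M N lam t v p) \<ge> - (30 / h\<^sup>2 * (\<Sum>p\<in>interior M N. (v p)\<^sup>2))"
proof -
  let ?I = "interior M N" and ?w = "ext0 M N v"
  let ?R = "\<lambda>p. 6 * (v p)\<^sup>2 + (?w (east p))\<^sup>2 + (?w (west p))\<^sup>2 + (?w (north p))\<^sup>2 + (?w (south p))\<^sup>2"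
  have pointwise: "- (3 / h\<^sup>2 * ?R p) \<le> v p * Aop h M N lam t v p" if p: "p \<in> ?I" for p
  proof -
    let ?S = "\<bar>v p\<bar> + \<bar>?w (east p)\<bar> + \<bar>?w (west p)\<bar> + \<bar>?w (north p)\<bar> + \<bar>?w (south p)\<bar>"
    have "\<bar>lam (snd p) t\<bar> \<le> 1/2" using lam p by (auto simp: interior_def)
    from Aop_abs_le_neighbours[where lam=lam and p=p and t=t, OF h this, of M N v]
    have "\<bar>v p\<bar> * \<bar>Aop h M N lam t v p\<bar> \<le> \<bar>v p\<bar> * (6 / h\<^sup>2 * ?S)"
      using p by (intro mult_left_mono) (simp_all add: ext0_def)
    also have "\<dots> = 3 / h\<^sup>2 * (2 * (\<bar>v p\<bar> * ?S))"
      by simp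
    also have "\<dots> \<le> 3 / h\<^sup>2 * ?R p"
      using mult_sum5_le_squares[of "\<bar>v p\<bar>" "\<bar>?w (east p)\<bar>" "\<bar>?w (west p)\<bar>"
          "\<bar>?w (north p)\<bar>" "\<bar>?w (south p)\<bar>"]
      by (intro mult_left_mono) simp_all
    finally show ?thesis
      by (metis abs_mult abs_le_iff minus_le_iff)
  qed
  have "- (3 / h\<^sup>2 * (\<Sum>p\<in>?I. ?R p)) \<le> (\<Sum>p\<in>?I. v p * Aop h M N lam t v p)"
    using sum_mono[OF pointwise] by (simp add: sum_negf sum_distrib_left)
  moreover have "(\<Sum>p\<in>?I. ?R p) \<le> 10 * (\<Sum>p\<in>?I. (v p)\<^sup>2)"
  proof -
    have "(\<Sum>p\<in>?I. ?R p) = 6 * (\<Sum>p\<in>?I. (v p)\<^sup>2) + (\<Sum>p\<in>?I. (?w (east p))\<^sup>2)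
        + (\<Sum>p\<in>?I. (?w (west p))\<^sup>2) + (\<Sum>p\<in>?I. (?w (north p))\<^sup>2)
        + (\<Sum>p\<in>?I. (?w (south p))\<^sup>2)"
      by (simp only: sum.distrib sum_distrib_left[symmetric])
    then show ?thesis
      using sum_shifted_squares_le[OF inj_on_neighbours(1), of M N v]
        sum_shifted_squares_le[OF inj_on_neighbours(2), of M N v]
        sum_shifted_squares_le[OF inj_on_neighbours(3), of M N v]
        sum_shifted_squares_le[OF inj_on_neighbours(4), of M N v]
      by linarith
  qed
  then have "3 / h\<^sup>2 * (\<Sum>p\<in>?I. ?R p) \<le> 3 / h\<^sup>2 * (10 * (\<Sum>p\<in>?I. (v p)\<^sup>2))"
    by (rule mult_left_mono) simp
  ultimately show ?thesis
    by linarith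
qed

section \<open>Energy estimate\<close>

lemma gronwall_zero_initial:
  fixes E E' :: "real \<Rightarrow> real" and k b T :: real
  assumes "k \<ge> 0" "b \<ge> 0" "E 0 = 0"
    and deriv: "\<And>t. t \<in> {0..T} \<Longrightarrow> (E has_real_derivative E' t) (at t within {0..})"
    and growth: "\<And>t. t \<in> {0..T} \<Longrightarrow> E' t \<le> k * E t + b"
    and t: "t \<in> {0..T}"
  shows "E t \<le> b * t * exp (k * t)"
proof -
  define \<phi> where "\<phi> s = exp (- k * s) * E s - b * s" for s
  define \<phi>' where "\<phi>' s = exp (- k * s) * (E' s - k * E s) - b" for s
  have d\<phi>: "(\<phi> has_real_derivative \<phi>' s) (at s within {0..})" if "s \<in> {0..T}" for s
    unfolding \<phi>_def \<phi>'_def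
    by (rule derivative_eq_intros deriv[OF that] refl | simp add: algebra_simps)+
  have \<phi>'_nonpos: "\<phi>' s \<le> 0" if s: "s \<in> {0..T}" for s
  proof -
    have "exp (- k * s) * (E' s - k * E s) \<le> exp (- k * s) * b"
      using growth[OF s] by (intro mult_left_mono) auto
    also have "\<dots> \<le> b"
      using s assms(1,2) by (intro mult_left_le_one_le) auto
    finally show ?thesis by (simp add: \<phi>'_def)
  qed
  have "\<phi> t \<le> \<phi> 0"
  proof (rule DERIV_nonpos_imp_decreasing_open[of 0 t \<phi>])
    show "0 \<le> t" using t by simp
    show "continuous_on {0..t} \<phi>"
      using t by (intro DERIV_continuous_on[where D=\<phi>'] DERIV_subset[OF d\<phi>]) auto
  next
    fix s assume s: "0 < s" "s < t"
    then have "(\<phi> has_real_derivative \<phi>' s) (at s within {0<..})"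
      using t by (intro DERIV_subset[OF d\<phi>]) auto
    then have "(\<phi> has_real_derivative \<phi>' s) (at s)"
      using s at_within_open[of s "{0<..}"] by simp
    then show "\<exists>y. (\<phi> has_real_derivative y) (at s) \<and> y \<le> 0"
      using \<phi>'_nonpos s t by auto
  qed
  then have "exp (- k * t) * E t \<le> b * t"
    using assms(3) by (simp add: \<phi>_def)
  then show ?thesis
    by (simp add: exp_minus field_simps)
qed

text \<open>The rate \<open>60 / h\<^sup>2 + 1\<close> is \<open>2 \<cdot> 30 / h\<^sup>2\<close> from \<open>Aop_quadratic_form_ge\<close> plus \<open>1\<close> from
  absorbing the forcing by \<open>2 w g \<le> w\<^sup>2 + g\<^sup>2\<close>.\<close>

definition energy_const :: "real \<Rightarrow> nat \<Rightarrow> nat \<Rightarrow> real \<Rightarrow> real" where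
  "energy_const h M N T = sqrt (real (card (interior M N)) * T * exp ((60 / h\<^sup>2 + 1) * T))"

lemma energy_const_nonneg: "T \<ge> 0 \<Longrightarrow> energy_const h M N T \<ge> 0"
  by (simp add: energy_const_def)

lemma energy_estimate:
  fixes W g :: "real \<Rightarrow> nat \<times> nat \<Rightarrow> real" and mu :: "nat \<Rightarrow> real \<Rightarrow> real"
  assumes h: "h > 0"
    and mu: "\<And>t j. t \<in> {0..T} \<Longrightarrow> j \<in> {1..N-1} \<Longrightarrow> \<bar>mu j t\<bar> \<le> 1/2"
    and initial: "\<And>p. p \<in> interior M N \<Longrightarrow> W 0 p = 0"
    and deriv: "\<And>p t. p \<in> interior M N \<Longrightarrow> t \<in> {0..T} \<Longrightarrow>
                  ((\<lambda>s. W s p) has_real_derivative g t p) (at t within {0..})"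
    and forcing: "\<And>p t. p \<in> interior M N \<Longrightarrow> t \<in> {0..T} \<Longrightarrow> \<bar>g t p + Aop h M N mu t (W t) p\<bar> \<le> c"
    and c: "c \<ge> 0" and p: "p \<in> interior M N" and t: "t \<in> {0..T}"
  shows "\<bar>W t p\<bar> \<le> energy_const h M N T * c"
proof -
  let ?I = "interior M N"
  define n where "n = real (card ?I)"
  define k where "k = 60 / h\<^sup>2 + 1"
  define E where "E s = (\<Sum>q\<in>?I. (W s q)\<^sup>2)" for s
  define E' where "E' s = (\<Sum>q\<in>?I. 2 * W s q * g s q)" for s
  have dE: "(E has_real_derivative E' s) (at s within {0..})" if "s \<in> {0..T}" for s
    unfolding E_def E'_def
    by (rule derivative_eq_intros deriv[OF _ that] refl | simp add: algebra_simps)+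
  have growth: "E' s \<le> k * E s + n * c\<^sup>2" if s: "s \<in> {0..T}" for s
  proof -
    define a where "a q = g s q + Aop h M N mu s (W s) q" for q
    have "E' s = (\<Sum>q\<in>?I. 2 * W s q * a q) - 2 * (\<Sum>q\<in>?I. W s q * Aop h M N mu s (W s) q)"
      by (simp add: E'_def a_def algebra_simps sum_subtractf sum_distrib_left sum.distrib)
    moreover have "(\<Sum>q\<in>?I. 2 * W s q * a q) \<le> (\<Sum>q\<in>?I. (W s q)\<^sup>2 + c\<^sup>2)"
    proof (rule sum_mono)
      fix q assume "q \<in> ?I"
      then have "(a q)\<^sup>2 \<le> c\<^sup>2"
        using forcing[OF _ s] c by (simp add: a_def abs_le_square_iff[symmetric])
      then show "2 * W s q * a q \<le> (W s q)\<^sup>2 + c\<^sup>2"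
        using sum_squares_bound[of "W s q" "a q"] by linarith
    qed
    moreover have "(\<Sum>q\<in>?I. W s q * Aop h M N mu s (W s) q) \<ge> - (30 / h\<^sup>2 * E s)"
      using Aop_quadratic_form_ge[OF h] mu[OF s] by (simp add: E_def)
    ultimately show ?thesis
      by (simp add: E_def n_def k_def sum.distrib algebra_simps)
  qed
  have "(W t p)\<^sup>2 \<le> E t"
    unfolding E_def by (rule member_le_sum) (use p finite_interior in auto)
  also have "E t \<le> n * c\<^sup>2 * t * exp (k * t)"
    by (rule gronwall_zero_initial[OF _ _ _ dE growth t]) (simp_all add: k_def n_def E_def initial)
  also have "\<dots> \<le> n * c\<^sup>2 * T * exp (k * T)"
    using t by (intro mult_mono) (auto simp: n_def k_def mult_left_mono)
  also have "\<dots> = (energy_const h M N T * c)\<^sup>2"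
    using t by (simp add: energy_const_def n_def k_def power_mult_distrib)
  finally show ?thesis
    using c t energy_const_nonneg by (simp add: abs_le_square_iff[symmetric])
qed

section \<open>The perturbation space\<close>

lemma abs_le_pnorm:
  assumes "x \<in> pspace N" "j \<in> {1..N-1}" "t \<ge> 0"
  shows "\<bar>x j t\<bar> \<le> pnorm N x"
proof -
  obtain B where "\<forall>s\<in>{0..}. \<bar>x j s\<bar> \<le> B"
    using assms unfolding pspace_def bounded_real by blast
  then have "\<bar>x j t\<bar> \<le> (SUP s\<in>{0::real..}. \<bar>x j s\<bar>)"
    using assms(3) by (intro cSUP_upper bdd_aboveI2) auto
  also have "\<dots> \<le> pnorm N x"
    unfolding pnorm_def using assms(2) by (intro Max_ge) auto
  finally show ?thesis .
qed

lemma pnorm_le: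
  assumes "N \<ge> 2" and "\<And>j t. j \<in> {1..N-1} \<Longrightarrow> t \<ge> 0 \<Longrightarrow> \<bar>x j t\<bar> \<le> B"
  shows "pnorm N x \<le> B"
  unfolding pnorm_def using assms by (auto intro!: cSUP_least)

lemma pnorm_nonneg: "N \<ge> 2 \<Longrightarrow> x \<in> pspace N \<Longrightarrow> pnorm N x \<ge> 0"
  using abs_le_pnorm[of x N 1 0] by fastforce

lemma pnorm_scale_le:
  assumes "N \<ge> 2" "x \<in> pspace N"
  shows "pnorm N (\<lambda>j t. c * x j t) \<le> \<bar>c\<bar> * pnorm N x"
  using assms abs_le_pnorm[OF assms(2)]
  by (intro pnorm_le) (auto simp: abs_mult mult_left_mono)

lemma pnorm_divide_le:
  assumes "N \<ge> 2" "x \<in> pspace N"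
  shows "pnorm N (\<lambda>j t. x j t / c) \<le> pnorm N x / \<bar>c\<bar>"
  using pnorm_scale_le[OF assms, of "inverse c"]
  by (simp add: divide_inverse mult.commute abs_inverse)

lemma pspace_lincomb:
  assumes "x \<in> pspace N" "y \<in> pspace N"
  shows "(\<lambda>j t. a * x j t + b * y j t) \<in> pspace N"
  unfolding pspace_def
proof (intro CollectI ballI conjI)
  fix j assume j: "j \<in> {1..N-1}"
  show "continuous_on {0..} (\<lambda>t. a * x j t + b * y j t)"
    using assms j by (auto simp: pspace_def intro!: continuous_intros)
  have "bounded ((\<lambda>t. a * x j t) ` {0..})" "bounded ((\<lambda>t. b * y j t) ` {0..})"
    using assms j bounded_scaling[of "x j ` {0..}" a] bounded_scaling[of "y j ` {0..}" b]
    by (auto simp: pspace_def image_image)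
  then show "bounded ((\<lambda>t. a * x j t + b * y j t) ` {0..})"
    by (rule bounded_plus_comp)
qed

lemma pspace_divide: "x \<in> pspace N \<Longrightarrow> (\<lambda>j t. x j t / c) \<in> pspace N"
  using pspace_lincomb[of x N x "inverse c" 0] by (simp add: divide_inverse mult.commute)

lemma zero_in_Wh: "N \<ge> 2 \<Longrightarrow> (\<lambda>j t. 0) \<in> Wh N"
  using pnorm_le[of N "\<lambda>j t. 0" 0] by (simp add: Wh_def pspace_def image_constant_conv)

lemma divide_in_Wh:
  assumes "N \<ge> 2" "x \<in> pspace N" "pnorm N x / \<bar>c\<bar> < 1/2"
  shows "(\<lambda>j t. x j t / c) \<in> Wh N"
  using pnorm_divide_le[OF assms(1,2), of c] assms(3) pspace_divide[OF assms(2), of c]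
  unfolding Wh_def by (blast intro: le_less_trans)

lemma shrink_in_Wh:
  assumes "N \<ge> 2" "x \<in> pspace N" "2 * pnorm N x < real n"
  shows "(\<lambda>j t. x j t / real n) \<in> Wh N"
  using assms pnorm_nonneg[OF assms(1,2)] by (intro divide_in_Wh) (auto simp: divide_less_eq)

lemma mult_pnorm_shrink_sq_le:
  assumes "N \<ge> 2" "x \<in> pspace N" "n > 0"
  shows "real n * (pnorm N (\<lambda>j t. x j t / real n))\<^sup>2 \<le> (pnorm N x)\<^sup>2 / real n"
proof -
  have "(pnorm N (\<lambda>j t. x j t / real n))\<^sup>2 \<le> (pnorm N x / real n)\<^sup>2"
    using pnorm_divide_le[OF assms(1,2), of "real n"] pnorm_nonneg[OF assms(1) pspace_divide[OF assms(2)]]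
    by (intro power_mono) auto
  then show ?thesis
    using assms(3) by (simp add: power2_eq_square field_simps)
qed

lemma eventually_gt_real_sequentially: "\<forall>\<^sub>F n in sequentially. c < real n"
  using filterlim_real_sequentially by (simp add: filterlim_at_top_dense)

section \<open>Quadratic defect implies differentiability at zero\<close>

lemma convergent_if_Cauchy_inverse_bound:
  fixes X :: "nat \<Rightarrow> real"
  assumes "\<forall>\<^sub>F n in sequentially. \<forall>m\<ge>n. \<bar>X n - X m\<bar> \<le> B / real n"
  shows "convergent X"
proof (rule real_Cauchy_convergent, rule CauchyI')
  fix e :: real assume "e > 0"
  then have "\<forall>\<^sub>F n in sequentially. B / real n < e"
    by (rule order_tendstoD(2)[OF lim_const_over_n])
  from eventually_conj[OF assms this] obtain M
    where M: "\<And>n. M \<le> n \<Longrightarrow> (\<forall>m\<ge>n. \<bar>X n - X m\<bar> \<le> B / real n) \<and> B / real n < e"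
    unfolding eventually_sequentially by blast
  show "\<exists>M. \<forall>m\<ge>M. \<forall>n>m. dist (X m) (X n) < e"
  proof (intro exI allI impI)
    fix m n assume "M \<le> m" "m < n"
    then have "\<bar>X m - X n\<bar> \<le> B / real m" "B / real m < e"
      using M[of m] by auto
    then show "dist (X m) (X n) < e"
      by (simp add: dist_real_def)
  qed
qed

locale quadratically_near_linear =
  fixes N :: nat and P :: "'i set" and \<Phi> :: "'i \<Rightarrow> (nat \<Rightarrow> real \<Rightarrow> real) \<Rightarrow> real"
    and C K :: real
  assumes N: "N \<ge> 2" and C: "C \<ge> 0" and K: "K \<ge> 0"
    and Lipschitz_at_zero: "\<And>i x. i \<in> P \<Longrightarrow> x \<in> Wh N \<Longrightarrow> \<bar>\<Phi> i x\<bar> \<le> C * pnorm N x"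
    and defect:
      "\<And>i c1 c2 c3 x1 x2 x3. i \<in> P \<Longrightarrow> x1 \<in> Wh N \<Longrightarrow> x2 \<in> Wh N \<Longrightarrow> x3 \<in> Wh N \<Longrightarrow>
         (\<And>j t. c1 * x1 j t + c2 * x2 j t + c3 * x3 j t = 0) \<Longrightarrow>
         \<bar>c1 * \<Phi> i x1 + c2 * \<Phi> i x2 + c3 * \<Phi> i x3\<bar>
           \<le> K * (\<bar>c1\<bar> * (pnorm N x1)\<^sup>2 + \<bar>c2\<bar> * (pnorm N x2)\<^sup>2 + \<bar>c3\<bar> * (pnorm N x3)\<^sup>2)"
begin

lemma defect_two_terms:
  assumes "i \<in> P" "x1 \<in> Wh N" "x2 \<in> Wh N" "\<And>j t. c1 * x1 j t + c2 * x2 j t = 0"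
  shows "\<bar>c1 * \<Phi> i x1 + c2 * \<Phi> i x2\<bar> \<le> K * (\<bar>c1\<bar> * (pnorm N x1)\<^sup>2 + \<bar>c2\<bar> * (pnorm N x2)\<^sup>2)"
  using defect[OF assms(1-3) assms(2), of c1 c2 0] assms(4) by simp

definition diff_quotient :: "(nat \<Rightarrow> real \<Rightarrow> real) \<Rightarrow> 'i \<Rightarrow> nat \<Rightarrow> real" where
  "diff_quotient x i n = real n * \<Phi> i (\<lambda>j t. x j t / real n)"

definition deriv0 :: "(nat \<Rightarrow> real \<Rightarrow> real) \<Rightarrow> 'i \<Rightarrow> real" where
  "deriv0 x i = lim (diff_quotient x i)"

lemma diff_quotient_Cauchy:
  assumes x: "x \<in> pspace N" and i: "i \<in> P" and n: "2 * pnorm N x < real n" and "n \<le> m"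
  shows "\<bar>diff_quotient x i n - diff_quotient x i m\<bar> \<le> 2 * K * (pnorm N x)\<^sup>2 / real n"
proof -
  have m: "2 * pnorm N x < real m" using n \<open>n \<le> m\<close> by linarith
  have pos: "n > 0" "m > 0" using n m pnorm_nonneg[OF N x] by auto
  have "\<bar>diff_quotient x i n - diff_quotient x i m\<bar>
      \<le> K * (real n * (pnorm N (\<lambda>j t. x j t / real n))\<^sup>2 + real m * (pnorm N (\<lambda>j t. x j t / real m))\<^sup>2)"
    using defect_two_terms[OF i shrink_in_Wh[OF N x n] shrink_in_Wh[OF N x m], of "real n" "- real m"] pos
    by (simp add: diff_quotient_def)
  also have "\<dots> \<le> K * ((pnorm N x)\<^sup>2 / real n + (pnorm N x)\<^sup>2 / real m)"
    using mult_pnorm_shrink_sq_le[OF N x] pos K by (intro mult_left_mono add_mono) auto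
  also have "\<dots> \<le> K * (2 * (pnorm N x)\<^sup>2 / real n)"
  proof -
    have "(pnorm N x)\<^sup>2 / real m \<le> (pnorm N x)\<^sup>2 / real n"
      using pos \<open>n \<le> m\<close> by (intro divide_left_mono) auto
    then show ?thesis
      using K by (intro mult_left_mono) auto
  qed
  finally show ?thesis by (simp add: ac_simps)
qed

lemma diff_quotient_tendsto_deriv0:
  assumes "x \<in> pspace N" "i \<in> P"
  shows "diff_quotient x i \<longlonglongrightarrow> deriv0 x i"
proof -
  have "convergent (diff_quotient x i)"
    using eventually_gt_real_sequentially[of "2 * pnorm N x"] diff_quotient_Cauchy[OF assms]
    by (intro convergent_if_Cauchy_inverse_bound[where B="2 * K * (pnorm N x)\<^sup>2"])
       (auto elim: eventually_mono)
  then show ?thesis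
    by (simp add: deriv0_def convergent_LIMSEQ_iff)
qed

lemma abs_deriv0_le:
  assumes x: "x \<in> pspace N" and i: "i \<in> P"
  shows "\<bar>deriv0 x i\<bar> \<le> C * pnorm N x"
proof (rule tendsto_le[OF _ tendsto_const tendsto_rabs[OF diff_quotient_tendsto_deriv0[OF assms]]])
  show "\<forall>\<^sub>F n in sequentially. \<bar>diff_quotient x i n\<bar> \<le> C * pnorm N x"
    using eventually_gt_real_sequentially[of "2 * pnorm N x"]
  proof eventually_elim
    case (elim n)
    then have pos: "real n > 0" using pnorm_nonneg[OF N x] by linarith
    have "\<bar>diff_quotient x i n\<bar> \<le> real n * (C * pnorm N (\<lambda>j t. x j t / real n))"
      using Lipschitz_at_zero[OF i shrink_in_Wh[OF N x elim]] pos
      by (simp add: diff_quotient_def abs_mult)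
    also have "\<dots> \<le> real n * (C * (pnorm N x / real n))"
      using pnorm_divide_le[OF N x, of "real n"] pos C by (intro mult_left_mono) auto
    finally show ?case using pos by simp
  qed
qed simp

lemma deriv0_lincomb:
  assumes x: "x \<in> pspace N" and y: "y \<in> pspace N" and i: "i \<in> P"
  shows "deriv0 (\<lambda>j t. a * x j t + b * y j t) i = a * deriv0 x i + b * deriv0 y i"
proof -
  define z where "z = (\<lambda>j t. a * x j t + b * y j t)"
  have z: "z \<in> pspace N" unfolding z_def by (rule pspace_lincomb[OF x y])
  define B where "B = K * ((pnorm N z)\<^sup>2 + \<bar>a\<bar> * (pnorm N x)\<^sup>2 + \<bar>b\<bar> * (pnorm N y)\<^sup>2)"
  let ?d = "\<lambda>n. diff_quotient z i n - (a * diff_quotient x i n + b * diff_quotient y i n)"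
  have "?d \<longlonglongrightarrow> deriv0 z i - (a * deriv0 x i + b * deriv0 y i)"
    by (intro tendsto_intros diff_quotient_tendsto_deriv0 z x y i)
  moreover have "?d \<longlonglongrightarrow> 0"
  proof (rule Lim_null_comparison[OF _ lim_const_over_n[of B]])
    show "\<forall>\<^sub>F n in sequentially. norm (?d n) \<le> B / real n"
      using eventually_gt_real_sequentially[of "2 * pnorm N z"]
        eventually_gt_real_sequentially[of "2 * pnorm N x"]
        eventually_gt_real_sequentially[of "2 * pnorm N y"]
    proof eventually_elim
      case (elim n)
      then have pos: "n > 0" using pnorm_nonneg[OF N z] by auto
      have "\<And>j t. real n * (z j t / real n) + (- a * real n) * (x j t / real n)
          + (- b * real n) * (y j t / real n) = 0"
        using pos by (simp add: z_def field_simps)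
      from defect[OF i shrink_in_Wh[OF N z elim(1)] shrink_in_Wh[OF N x elim(2)]
          shrink_in_Wh[OF N y elim(3)] this]
      have "\<bar>?d n\<bar> \<le> K * (real n * (pnorm N (\<lambda>j t. z j t / real n))\<^sup>2
          + \<bar>a\<bar> * (real n * (pnorm N (\<lambda>j t. x j t / real n))\<^sup>2)
          + \<bar>b\<bar> * (real n * (pnorm N (\<lambda>j t. y j t / real n))\<^sup>2))"
        by (simp add: diff_quotient_def abs_mult algebra_simps)
      also have "\<dots> \<le> K * ((pnorm N z)\<^sup>2 / real n + \<bar>a\<bar> * ((pnorm N x)\<^sup>2 / real n)
          + \<bar>b\<bar> * ((pnorm N y)\<^sup>2 / real n))"
        using mult_pnorm_shrink_sq_le[OF N _ pos] x y z K
        by (intro mult_left_mono add_mono) auto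
      also have "\<dots> = B / real n"
        using pos by (simp add: B_def field_simps)
      finally show ?case by simp
    qed
  qed
  ultimately show ?thesis
    using LIMSEQ_unique unfolding z_def by fastforce
qed

lemma Phi_minus_deriv0_le:
  assumes x: "x \<in> Wh N" and i: "i \<in> P"
  shows "\<bar>\<Phi> i x - deriv0 x i\<bar> \<le> 2 * K * (pnorm N x)\<^sup>2"
proof -
  have xp: "x \<in> pspace N" and small: "pnorm N x < 1/2"
    using x by (auto simp: Wh_def)
  have "\<bar>\<Phi> i x - diff_quotient x i n\<bar> \<le> 2 * K * (pnorm N x)\<^sup>2" if n: "n \<ge> 1" for n
  proof -
    have "pnorm N x / \<bar>real n\<bar> \<le> pnorm N x"
      using n pnorm_nonneg[OF N xp] by (simp add: divide_le_eq mult_le_cancel_left1)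
    then have "pnorm N x / \<bar>real n\<bar> < 1/2"
      using small by linarith
    then have xn: "(\<lambda>j t. x j t / real n) \<in> Wh N"
      by (rule divide_in_Wh[OF N xp])
    have "\<And>j t. 1 * x j t + - real n * (x j t / real n) = 0"
      using n by simp
    from defect_two_terms[OF i x xn this]
    have "\<bar>\<Phi> i x - diff_quotient x i n\<bar>
        \<le> K * ((pnorm N x)\<^sup>2 + real n * (pnorm N (\<lambda>j t. x j t / real n))\<^sup>2)"
      by (simp add: diff_quotient_def)
    also have "\<dots> \<le> K * ((pnorm N x)\<^sup>2 + (pnorm N x)\<^sup>2)"
    proof -
      have "(pnorm N x)\<^sup>2 / real n \<le> (pnorm N x)\<^sup>2 / 1"
        using n by (intro divide_left_mono) auto
      then show ?thesis
        using mult_pnorm_shrink_sq_le[OF N xp, of n] n K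
        by (intro mult_left_mono add_left_mono) auto
    qed
    finally show ?thesis by simp
  qed
  then show ?thesis
    by (intro tendsto_le[OF _ tendsto_const
          tendsto_rabs[OF tendsto_diff[OF tendsto_const diff_quotient_tendsto_deriv0[OF xp i]]]])
       (auto simp: eventually_sequentially)
qed

lemma differentiable_at_zero:
  "\<exists>L :: (nat \<Rightarrow> real \<Rightarrow> real) \<Rightarrow> 'i \<Rightarrow> real.
      (\<forall>x\<in>pspace N. \<forall>y\<in>pspace N. \<forall>a b. \<forall>i\<in>P.
          L (\<lambda>j t. a * x j t + b * y j t) i = a * L x i + b * L y i)
    \<and> (\<exists>C. \<forall>x\<in>pspace N. \<forall>i\<in>P. \<bar>L x i\<bar> \<le> C * pnorm N x)
    \<and> (\<forall>\<epsilon>>0. \<exists>\<delta>>0. \<forall>x\<in>Wh N. pnorm N x < \<delta> \<longrightarrow>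
          (\<forall>i\<in>P. \<bar>\<Phi> i x - L x i\<bar> \<le> \<epsilon> * pnorm N x))"
proof (intro exI[of _ deriv0] conjI)
  show "\<forall>\<epsilon>>0. \<exists>\<delta>>0. \<forall>x\<in>Wh N. pnorm N x < \<delta> \<longrightarrow>
          (\<forall>i\<in>P. \<bar>\<Phi> i x - deriv0 x i\<bar> \<le> \<epsilon> * pnorm N x)"
  proof (intro allI impI)
    fix \<epsilon> :: real assume \<epsilon>: "\<epsilon> > 0"
    show "\<exists>\<delta>>0. \<forall>x\<in>Wh N. pnorm N x < \<delta> \<longrightarrow> (\<forall>i\<in>P. \<bar>\<Phi> i x - deriv0 x i\<bar> \<le> \<epsilon> * pnorm N x)"
    proof (intro exI[of _ "\<epsilon> / (2 * K + 1)"] conjI ballI impI)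
      show "\<epsilon> / (2 * K + 1) > 0" using \<epsilon> K by simp
    next
      fix x i assume x: "x \<in> Wh N" and small: "pnorm N x < \<epsilon> / (2 * K + 1)" and i: "i \<in> P"
      have d: "pnorm N x \<ge> 0" using x pnorm_nonneg[OF N] by (simp add: Wh_def)
      have "2 * K * pnorm N x \<le> (2 * K + 1) * pnorm N x"
        using d by (simp add: algebra_simps)
      also have "\<dots> \<le> \<epsilon>"
        using small K by (simp add: pos_less_divide_eq mult.commute less_imp_le)
      finally have "2 * K * pnorm N x * pnorm N x \<le> \<epsilon> * pnorm N x"
        using d by (rule mult_right_mono)
      then show "\<bar>\<Phi> i x - deriv0 x i\<bar> \<le> \<epsilon> * pnorm N x"
        using Phi_minus_deriv0_le[OF x i] by (simp add: power2_eq_square)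
    qed
  qed
qed (use deriv0_lincomb abs_deriv0_le in blast)+

end

section \<open>The perturbed solutions\<close>

lemma two_div_one_plus_expansion:
  fixes x :: real
  assumes "\<bar>x\<bar> \<le> 1/2"
  shows "\<bar>2 / (1 + x) - 2\<bar> \<le> 4 * \<bar>x\<bar>" and "\<bar>2 / (1 + x) - 2 + 2 * x\<bar> \<le> 4 * x\<^sup>2"
proof -
  have pos: "1 + x \<ge> 1/2" using assms by auto
  have "2 / (1 + x) - 2 = - 2 * x / (1 + x)" "2 / (1 + x) - 2 + 2 * x = 2 * x\<^sup>2 / (1 + x)"
    using pos by (simp_all add: field_simps power2_eq_square)
  moreover have "2 * \<bar>x\<bar> \<le> 4 * \<bar>x\<bar> * (1 + x)" "2 * x\<^sup>2 \<le> 4 * x\<^sup>2 * (1 + x)"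
    using mult_left_mono[OF pos, of "4 * \<bar>x\<bar>"] mult_left_mono[OF pos, of "4 * x\<^sup>2"] by auto
  ultimately show "\<bar>2 / (1 + x) - 2\<bar> \<le> 4 * \<bar>x\<bar>" "\<bar>2 / (1 + x) - 2 + 2 * x\<bar> \<le> 4 * x\<^sup>2"
    using pos by (simp_all add: abs_divide abs_mult pos_divide_le_eq)
qed

lemma two_div_two_plus_expansion:
  fixes x :: real
  assumes "\<bar>x\<bar> \<le> 1/2"
  shows "\<bar>2 / (2 + x) - 1\<bar> \<le> \<bar>x\<bar>" and "\<bar>2 / (2 + x) - 1 + x / 2\<bar> \<le> x\<^sup>2"
proof -
  have pos: "2 + x \<ge> 1" using assms by auto
  have "2 / (2 + x) - 1 = - x / (2 + x)" "2 / (2 + x) - 1 + x / 2 = x\<^sup>2 / (2 * (2 + x))"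
    using pos by (simp_all add: field_simps power2_eq_square)
  moreover have "\<bar>x\<bar> \<le> \<bar>x\<bar> * (2 + x)" "x\<^sup>2 \<le> x\<^sup>2 * (2 * (2 + x))"
    using mult_left_mono[OF pos, of "\<bar>x\<bar>"] mult_left_mono[of 1 "2 * (2 + x)" "x\<^sup>2"] pos by auto
  ultimately show "\<bar>2 / (2 + x) - 1\<bar> \<le> \<bar>x\<bar>" "\<bar>2 / (2 + x) - 1 + x / 2\<bar> \<le> x\<^sup>2"
    using pos by (simp_all add: abs_divide abs_mult pos_divide_le_eq)
qed

lemma abs_mult_le_mult: "\<bar>a\<bar> \<le> A \<Longrightarrow> \<bar>b\<bar> \<le> B \<Longrightarrow> \<bar>a * b\<bar> \<le> A * (B::real)"
  by (simp add: abs_mult mult_mono')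

lemma boundary_stencil_abs_le:
  fixes x d a b B :: real
  assumes "\<bar>x\<bar> \<le> d" "d \<le> 1/2" "\<bar>a\<bar> \<le> B" "\<bar>b\<bar> \<le> B"
  shows "\<bar>(2 / (1 + x) - 2) * a - (2 / (2 + x) - 1) * b\<bar> \<le> 5 * B * d"
proof -
  have x: "\<bar>x\<bar> \<le> 1/2" using assms by linarith
  have "\<bar>(2 / (1 + x) - 2) * a\<bar> \<le> (4 * d) * B"
    using two_div_one_plus_expansion(1)[OF x] assms by (intro abs_mult_le_mult) linarith+
  moreover have "\<bar>(2 / (2 + x) - 1) * b\<bar> \<le> d * B"
    using two_div_two_plus_expansion(1)[OF x] assms by (intro abs_mult_le_mult) linarith+
  ultimately show ?thesis
    using abs_triangle_ineq4[of "(2 / (1 + x) - 2) * a" "(2 / (2 + x) - 1) * b"] by argo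
qed

lemma boundary_stencil_linearization:
  fixes x d a0 a1 b0 b1 B C :: real
  assumes "\<bar>x\<bar> \<le> d" "d \<le> 1/2" "\<bar>a0\<bar> \<le> B" "\<bar>b0\<bar> \<le> B" "\<bar>a1\<bar> \<le> C * d" "\<bar>b1\<bar> \<le> C * d"
  shows "\<bar>(2 / (1 + x) - 2) * (a0 + a1) - (2 / (2 + x) - 1) * (b0 + b1) - (- 2 * x * a0 + x / 2 * b0)\<bar>
           \<le> (5 * B + 5 * C) * d\<^sup>2"
proof -
  have x: "\<bar>x\<bar> \<le> 1/2" using assms by linarith
  have x2: "x\<^sup>2 \<le> d\<^sup>2" using power_mono[OF assms(1) abs_ge_zero, of 2] by simp
  have "(\<alpha> - 2) * (a0 + a1) - (\<beta> - 1) * (b0 + b1) - (- 2 * x * a0 + x / 2 * b0)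
      = (\<alpha> - 2 + 2 * x) * a0 + (\<alpha> - 2) * a1 - (\<beta> - 1 + x / 2) * b0 - (\<beta> - 1) * b1"
    for \<alpha> \<beta> :: real
    by (simp add: algebra_simps)
  note this[of "2 / (1 + x)" "2 / (2 + x)"]
  moreover have "\<bar>(2 / (1 + x) - 2 + 2 * x) * a0\<bar> \<le> (4 * d\<^sup>2) * B"
    using two_div_one_plus_expansion(2)[OF x] x2 assms by (intro abs_mult_le_mult) linarith+
  moreover have "\<bar>(2 / (1 + x) - 2) * a1\<bar> \<le> (4 * d) * (C * d)"
    using two_div_one_plus_expansion(1)[OF x] assms by (intro abs_mult_le_mult) linarith+
  moreover have "\<bar>(2 / (2 + x) - 1 + x / 2) * b0\<bar> \<le> d\<^sup>2 * B"
    using two_div_two_plus_expansion(2)[OF x] x2 assms by (intro abs_mult_le_mult) linarith+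
  moreover have "\<bar>(2 / (2 + x) - 1) * b1\<bar> \<le> d * (C * d)"
    using two_div_two_plus_expansion(1)[OF x] assms by (intro abs_mult_le_mult) linarith+
  moreover have "(4 * d\<^sup>2) * B + (4 * d) * (C * d) + d\<^sup>2 * B + d * (C * d) = (5 * B + 5 * C) * d\<^sup>2"
    by (simp add: algebra_simps power2_eq_square)
  ultimately show ?thesis
    by argo
qed

lemma solution_bounded:
  assumes "solves h M N F u0 lam w"
  shows "\<exists>B\<ge>0. \<forall>p\<in>interior M N. \<forall>t\<in>{0..T}. \<bar>w t p\<bar> \<le> B"
proof -
  have "continuous_on {0..T} (\<lambda>t. w t p)" if "p \<in> interior M N" for p
    using assms that unfolding solves_def
    by (intro DERIV_continuous_on[where D="\<lambda>t. F t p - Aop h M N lam t (w t) p"])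
       (auto intro: DERIV_subset[where s="{0..}"])
  then have "continuous_on {0..T} (\<lambda>t. \<Sum>p\<in>interior M N. \<bar>w t p\<bar>)"
    by (intro continuous_intros) auto
  then have "bounded ((\<lambda>t. \<Sum>p\<in>interior M N. \<bar>w t p\<bar>) ` {0..T})"
    by (intro compact_imp_bounded compact_continuous_image) auto
  then obtain B where B: "\<And>t. t \<in> {0..T} \<Longrightarrow> \<bar>\<Sum>p\<in>interior M N. \<bar>w t p\<bar>\<bar> \<le> B"
    unfolding bounded_real by blast
  have "\<bar>w t p\<bar> \<le> B" if "p \<in> interior M N" "t \<in> {0..T}" for p t
  proof -
    have "\<bar>w t p\<bar> \<le> (\<Sum>q\<in>interior M N. \<bar>w t q\<bar>)"
      by (rule member_le_sum) (use that finite_interior in auto)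
    also have "\<dots> \<le> B" using B[OF that(2)] by simp
    finally show ?thesis .
  qed
  then show ?thesis
    by (intro exI[of _ "max B 0"]) (auto intro: le_max_iff_disj[THEN iffD2])
qed

lemma boundary_term_abs_le:
  assumes "\<bar>lam (snd p) t\<bar> \<le> d" "d \<le> 1/2" "\<And>q. \<bar>ext0 M N v q\<bar> \<le> B"
  shows "\<bar>boundary_term h M N lam t v p\<bar> \<le> 5 * B / h\<^sup>2 * d"
proof (cases "fst p = 1")
  case True
  then show ?thesis
    using boundary_stencil_abs_le[OF assms(1,2) assms(3) assms(3)]
    by (simp add: boundary_term_def abs_divide divide_right_mono)
next
  case False
  have "0 \<le> B" "0 \<le> d" using assms(1,3) by (meson abs_ge_zero order_trans)+
  with False show ?thesis by (simp add: boundary_term_def)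
qed

lemma abs_le_pnorm_Wh:
  "lam \<in> Wh N \<Longrightarrow> j \<in> {1..N-1} \<Longrightarrow> t \<ge> 0 \<Longrightarrow> \<bar>lam j t\<bar> \<le> pnorm N lam \<and> pnorm N lam < 1/2"
  using abs_le_pnorm[of lam N j t] by (simp add: Wh_def)

locale heat_solutions =
  fixes h T :: real and M N :: nat and F :: "real \<Rightarrow> nat \<times> nat \<Rightarrow> real"
    and u0 :: "nat \<times> nat \<Rightarrow> real" and u :: "(nat \<Rightarrow> real \<Rightarrow> real) \<Rightarrow> real \<Rightarrow> nat \<times> nat \<Rightarrow> real"
    and B :: real
  assumes h: "h > 0" and N: "N \<ge> 2" and T: "T > 0"
    and solutions: "\<And>lam. lam \<in> Wh N \<Longrightarrow> solves h M N F u0 lam (u lam)"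
    and B: "B \<ge> 0"
    and unperturbed_le: "\<And>p t. p \<in> interior M N \<Longrightarrow> t \<in> {0..T} \<Longrightarrow> \<bar>u (\<lambda>j t. 0) t p\<bar> \<le> B"
begin

abbreviation unperturbed :: "real \<Rightarrow> nat \<times> nat \<Rightarrow> real" where
  "unperturbed \<equiv> u (\<lambda>j t. 0)"

definition rhs :: "(nat \<Rightarrow> real \<Rightarrow> real) \<Rightarrow> real \<Rightarrow> nat \<times> nat \<Rightarrow> real" where
  "rhs lam s q = F s q - Aop h M N lam s (u lam s) q"

lemma solution_initial: "lam \<in> Wh N \<Longrightarrow> p \<in> interior M N \<Longrightarrow> u lam 0 p = u0 p"
  using solutions by (simp add: solves_def)

lemma solution_deriv:
  "lam \<in> Wh N \<Longrightarrow> p \<in> interior M N \<Longrightarrow> t \<ge> 0 \<Longrightarrow>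
    ((\<lambda>s. u lam s p) has_real_derivative rhs lam t p) (at t within {0..})"
  using solutions by (simp add: solves_def rhs_def)

lemma ext0_unperturbed_le: "t \<in> {0..T} \<Longrightarrow> \<bar>ext0 M N (unperturbed t) q\<bar> \<le> B"
  using unperturbed_le B by (simp add: ext0_def)

lemma rhs_diff_eq:
  "rhs lam s q - rhs (\<lambda>j t. 0) s q + Aop h M N lam s (\<lambda>q. u lam s q - unperturbed s q) q
     = - boundary_term h M N lam s (unperturbed s) q"
  using Aop_eq_Aop_zero_plus_boundary_term[of h M N lam s "unperturbed s" q]
  by (simp add: rhs_def Aop_diff)

definition lipschitz_const :: real where
  "lipschitz_const = energy_const h M N T * (5 * B / h\<^sup>2)"

lemma lipschitz_const_nonneg: "lipschitz_const \<ge> 0"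
  using energy_const_nonneg T B by (simp add: lipschitz_const_def)

lemma solution_lipschitz_at_zero:
  assumes lam: "lam \<in> Wh N" and p: "p \<in> interior M N" and t: "t \<in> {0..T}"
  shows "\<bar>u lam t p - unperturbed t p\<bar> \<le> lipschitz_const * pnorm N lam"
proof -
  have small: "\<bar>lam j s\<bar> \<le> pnorm N lam" "pnorm N lam < 1/2" if "j \<in> {1..N-1}" "s \<ge> 0" for j s
    using abs_le_pnorm_Wh[OF lam that] by auto
  have norm_small: "pnorm N lam < 1/2"
    using lam by (simp add: Wh_def)
  have "\<bar>u lam t p - unperturbed t p\<bar> \<le> energy_const h M N T * (5 * B / h\<^sup>2 * pnorm N lam)"
  proof (rule energy_estimate[OF h _ _ _ _ _ p t, where mu=lam and g="\<lambda>s q. rhs lam s q - rhs (\<lambda>j t. 0) s q"])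
    show "\<bar>lam j s\<bar> \<le> 1/2" if "s \<in> {0..T}" "j \<in> {1..N-1}" for s j
      using small[of j s] that by auto
    show "u lam 0 q - unperturbed 0 q = 0" if "q \<in> interior M N" for q
      using solution_initial[OF lam that] solution_initial[OF zero_in_Wh[OF N] that] by simp
    show "0 \<le> 5 * B / h\<^sup>2 * pnorm N lam"
      using B pnorm_nonneg[OF N] lam by (simp add: Wh_def)
  next
    fix q s assume q: "q \<in> interior M N" and s: "s \<in> {0..T}"
    show "((\<lambda>s. u lam s q - unperturbed s q) has_real_derivative rhs lam s q - rhs (\<lambda>j t. 0) s q)
        (at s within {0..})"
      using s by (intro DERIV_diff solution_deriv[OF lam q] solution_deriv[OF zero_in_Wh[OF N] q]) auto
    have "\<bar>boundary_term h M N lam s (unperturbed s) q\<bar> \<le> 5 * B / h\<^sup>2 * pnorm N lam"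
      using q s small norm_small ext0_unperturbed_le[OF s]
      by (intro boundary_term_abs_le) (auto simp: interior_def)
    then show "\<bar>rhs lam s q - rhs (\<lambda>j t. 0) s q + Aop h M N lam s (\<lambda>q. u lam s q - unperturbed s q) q\<bar>
        \<le> 5 * B / h\<^sup>2 * pnorm N lam"
      by (simp add: rhs_diff_eq)
  qed
  then show ?thesis
    by (simp add: lipschitz_const_def mult.assoc)
qed

definition boundary_weight :: "real \<Rightarrow> nat \<Rightarrow> real" where
  "boundary_weight t j = (- 2 * ext0 M N (unperturbed t) (1, j) + ext0 M N (unperturbed t) (2, j) / 2) / h\<^sup>2"

definition linear_boundary_term :: "(nat \<Rightarrow> real \<Rightarrow> real) \<Rightarrow> real \<Rightarrow> nat \<times> nat \<Rightarrow> real" where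
  "linear_boundary_term lam t p = (if fst p = 1 then lam (snd p) t * boundary_weight t (snd p) else 0)"

definition linearization_error :: "(nat \<Rightarrow> real \<Rightarrow> real) \<Rightarrow> real \<Rightarrow> nat \<times> nat \<Rightarrow> real" where
  "linearization_error lam t p = boundary_term h M N lam t (u lam t) p - linear_boundary_term lam t p"

definition quadratic_const :: real where
  "quadratic_const = (5 * B + 5 * lipschitz_const) / h\<^sup>2"

lemma quadratic_const_nonneg: "quadratic_const \<ge> 0"
  using B lipschitz_const_nonneg by (simp add: quadratic_const_def)

lemma abs_linearization_error_le:
  assumes lam: "lam \<in> Wh N" and p: "p \<in> interior M N" and t: "t \<in> {0..T}"
  shows "\<bar>linearization_error lam t p\<bar> \<le> quadratic_const * (pnorm N lam)\<^sup>2"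
proof (cases "fst p = 1")
  case True
  define j where "j = snd p"
  define d where "d = pnorm N lam"
  define w0 where "w0 = ext0 M N (unperturbed t)"
  define w1 where "w1 = ext0 M N (\<lambda>q. u lam t q - unperturbed t q)"
  define X where "X = (2 / (1 + lam j t) - 2) * (w0 (1, j) + w1 (1, j))
      - (2 / (2 + lam j t) - 1) * (w0 (2, j) + w1 (2, j))
      - (- 2 * lam j t * w0 (1, j) + lam j t / 2 * w0 (2, j))"
  have "j \<in> {1..N-1}" using p by (auto simp: j_def interior_def)
  from abs_le_pnorm_Wh[OF lam this, of t] t have "\<bar>lam j t\<bar> \<le> d" "d \<le> 1/2"
    by (auto simp: d_def)
  moreover have "\<bar>w1 q\<bar> \<le> lipschitz_const * d" for q
    using solution_lipschitz_at_zero[OF lam _ t] lipschitz_const_nonneg pnorm_nonneg[OF N] lam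
    by (auto simp: w1_def ext0_def d_def Wh_def)
  ultimately have "\<bar>X\<bar> \<le> (5 * B + 5 * lipschitz_const) * d\<^sup>2"
    unfolding X_def using ext0_unperturbed_le[OF t]
    by (intro boundary_stencil_linearization) (auto simp: w0_def)
  then have bound: "\<bar>X\<bar> / h\<^sup>2 \<le> quadratic_const * d\<^sup>2"
    by (simp add: quadratic_const_def divide_right_mono)
  have "ext0 M N (u lam t) q = w0 q + w1 q" for q
    by (simp add: ext0_def w0_def w1_def)
  then have "boundary_term h M N lam t (u lam t) p
      = ((2 / (1 + lam j t) - 2) * (w0 (1, j) + w1 (1, j))
         - (2 / (2 + lam j t) - 1) * (w0 (2, j) + w1 (2, j))) / h\<^sup>2"
    using True by (simp add: boundary_term_def j_def)
  moreover have "linear_boundary_term lam t p = (- 2 * lam j t * w0 (1, j) + lam j t / 2 * w0 (2, j)) / h\<^sup>2"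
    using True by (simp add: linear_boundary_term_def boundary_weight_def j_def w0_def algebra_simps)
  ultimately have "linearization_error lam t p = X / h\<^sup>2"
    by (simp only: linearization_error_def X_def diff_divide_distrib)
  with bound show ?thesis
    by (simp add: abs_divide d_def)
next
  case False
  then show ?thesis
    using quadratic_const_nonneg
    by (simp add: linearization_error_def boundary_term_def linear_boundary_term_def)
qed

lemma linear_boundary_term_lincomb3:
  "c1 * linear_boundary_term l1 t p + c2 * linear_boundary_term l2 t p + c3 * linear_boundary_term l3 t p
     = linear_boundary_term (\<lambda>j t. c1 * l1 j t + c2 * l2 j t + c3 * l3 j t) t p"
  by (simp add: linear_boundary_term_def algebra_simps)

lemma rhs_lincomb3_eq:
  assumes "\<And>j t. c1 * l1 j t + c2 * l2 j t + c3 * l3 j t = 0"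
  shows "c1 * (rhs l1 s q - rhs (\<lambda>j t. 0) s q) + c2 * (rhs l2 s q - rhs (\<lambda>j t. 0) s q)
           + c3 * (rhs l3 s q - rhs (\<lambda>j t. 0) s q)
         + Aop h M N (\<lambda>j t. 0) s (\<lambda>q. c1 * (u l1 s q - unperturbed s q) + c2 * (u l2 s q - unperturbed s q)
             + c3 * (u l3 s q - unperturbed s q)) q
       = - (c1 * linearization_error l1 s q + c2 * linearization_error l2 s q
             + c3 * linearization_error l3 s q)"
proof -
  have "c1 * linear_boundary_term l1 s q + c2 * linear_boundary_term l2 s q
      + c3 * linear_boundary_term l3 s q = 0"
    by (simp only: linear_boundary_term_lincomb3 assms) (simp add: linear_boundary_term_def)
  then show ?thesis
    using Aop_eq_Aop_zero_plus_boundary_term[of h M N l1 s "u l1 s" q]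
      Aop_eq_Aop_zero_plus_boundary_term[of h M N l2 s "u l2 s" q]
      Aop_eq_Aop_zero_plus_boundary_term[of h M N l3 s "u l3 s" q]
    unfolding Aop_lincomb3 Aop_diff
    by (simp add: rhs_def linearization_error_def algebra_simps)
qed

lemma solution_defect:
  assumes l1: "l1 \<in> Wh N" and l2: "l2 \<in> Wh N" and l3: "l3 \<in> Wh N"
    and cancel: "\<And>j t. c1 * l1 j t + c2 * l2 j t + c3 * l3 j t = 0"
    and p: "p \<in> interior M N" and t: "t \<in> {0..T}"
  shows "\<bar>c1 * (u l1 t p - unperturbed t p) + c2 * (u l2 t p - unperturbed t p)
            + c3 * (u l3 t p - unperturbed t p)\<bar>
         \<le> energy_const h M N T * quadratic_const
             * (\<bar>c1\<bar> * (pnorm N l1)\<^sup>2 + \<bar>c2\<bar> * (pnorm N l2)\<^sup>2 + \<bar>c3\<bar> * (pnorm N l3)\<^sup>2)"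
  unfolding mult.assoc
proof (rule energy_estimate[OF h _ _ _ _ _ p t, where mu="\<lambda>j t. 0"
      and g="\<lambda>s q. c1 * (rhs l1 s q - rhs (\<lambda>j t. 0) s q) + c2 * (rhs l2 s q - rhs (\<lambda>j t. 0) s q)
                 + c3 * (rhs l3 s q - rhs (\<lambda>j t. 0) s q)"])
  show "c1 * (u l1 0 q - unperturbed 0 q) + c2 * (u l2 0 q - unperturbed 0 q)
      + c3 * (u l3 0 q - unperturbed 0 q) = 0" if "q \<in> interior M N" for q
    using solution_initial[OF _ that] l1 l2 l3 zero_in_Wh[OF N] by simp
  show "0 \<le> quadratic_const * (\<bar>c1\<bar> * (pnorm N l1)\<^sup>2 + \<bar>c2\<bar> * (pnorm N l2)\<^sup>2 + \<bar>c3\<bar> * (pnorm N l3)\<^sup>2)"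
    using quadratic_const_nonneg by simp
next
  fix q s assume q: "q \<in> interior M N" and s: "s \<in> {0..T}"
  show "((\<lambda>s. c1 * (u l1 s q - unperturbed s q) + c2 * (u l2 s q - unperturbed s q)
      + c3 * (u l3 s q - unperturbed s q)) has_real_derivative
      c1 * (rhs l1 s q - rhs (\<lambda>j t. 0) s q) + c2 * (rhs l2 s q - rhs (\<lambda>j t. 0) s q)
        + c3 * (rhs l3 s q - rhs (\<lambda>j t. 0) s q)) (at s within {0..})"
    using s zero_in_Wh[OF N]
    by (intro DERIV_add DERIV_cmult DERIV_diff solution_deriv l1 l2 l3 q) auto
  have "\<bar>c1 * linearization_error l1 s q + c2 * linearization_error l2 s q
      + c3 * linearization_error l3 s q\<bar>
      \<le> \<bar>c1\<bar> * (quadratic_const * (pnorm N l1)\<^sup>2) + \<bar>c2\<bar> * (quadratic_const * (pnorm N l2)\<^sup>2)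
        + \<bar>c3\<bar> * (quadratic_const * (pnorm N l3)\<^sup>2)"
    using abs_linearization_error_le[OF l1 q s] abs_linearization_error_le[OF l2 q s]
      abs_linearization_error_le[OF l3 q s]
    by (intro order_trans[OF abs_triangle_ineq] add_mono order_trans[OF abs_triangle_ineq])
       (auto simp: abs_mult intro: mult_left_mono)
  then show "\<bar>c1 * (rhs l1 s q - rhs (\<lambda>j t. 0) s q) + c2 * (rhs l2 s q - rhs (\<lambda>j t. 0) s q)
        + c3 * (rhs l3 s q - rhs (\<lambda>j t. 0) s q)
      + Aop h M N (\<lambda>j t. 0) s (\<lambda>q. c1 * (u l1 s q - unperturbed s q) + c2 * (u l2 s q - unperturbed s q)
        + c3 * (u l3 s q - unperturbed s q)) q\<bar>
      \<le> quadratic_const * (\<bar>c1\<bar> * (pnorm N l1)\<^sup>2 + \<bar>c2\<bar> * (pnorm N l2)\<^sup>2 + \<bar>c3\<bar> * (pnorm N l3)\<^sup>2)"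
    by (simp only: rhs_lincomb3_eq[OF cancel] abs_minus_cancel) (simp add: algebra_simps)
qed simp

end

text \<open>Existence of the perturbed solutions is a hypothesis.\<close>

theorem theorem2p14:
  fixes h T :: real and M N :: nat
    and F :: "real \<Rightarrow> nat \<times> nat \<Rightarrow> real" and u0 :: "nat \<times> nat \<Rightarrow> real"
    and u :: "(nat \<Rightarrow> real \<Rightarrow> real) \<Rightarrow> real \<Rightarrow> nat \<times> nat \<Rightarrow> real"
  assumes "h > 0" and "M \<ge> 2" and "N \<ge> 2" and "T > 0"
    and "\<forall>p\<in>interior M N. continuous_on {0..} (\<lambda>t. F t p)"
    and "\<forall>lam\<in>Wh N. solves h M N F u0 lam (u lam)"
  shows "\<exists>L :: (nat \<Rightarrow> real \<Rightarrow> real) \<Rightarrow> nat \<times> nat \<Rightarrow> real.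
           (\<forall>x\<in>pspace N. \<forall>y\<in>pspace N. \<forall>a b. \<forall>p\<in>interior M N.
               L (\<lambda>j t. a * x j t + b * y j t) p = a * L x p + b * L y p)
         \<and> (\<exists>C. \<forall>x\<in>pspace N. \<forall>p\<in>interior M N. \<bar>L x p\<bar> \<le> C * pnorm N x)
         \<and> (\<forall>\<epsilon>>0. \<exists>\<delta>>0. \<forall>lam\<in>Wh N. pnorm N lam < \<delta> \<longrightarrow>
               (\<forall>p\<in>interior M N.
                  \<bar>u lam T p - u (\<lambda>j t. 0) T p - L lam p\<bar> \<le> \<epsilon> * pnorm N lam))"
proof -
  obtain B where B: "B \<ge> 0" "\<forall>p\<in>interior M N. \<forall>t\<in>{0..T}. \<bar>u (\<lambda>j t. 0) t p\<bar> \<le> B"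
    using solution_bounded assms(6) zero_in_Wh[OF assms(3)] by blast
  interpret heat_solutions h T M N F u0 u B
    using assms B by unfold_locales auto
  interpret quadratically_near_linear N "interior M N" "\<lambda>p lam. u lam T p - unperturbed T p"
    lipschitz_const "energy_const h M N T * quadratic_const"
  proof unfold_locales
    show "0 \<le> energy_const h M N T * quadratic_const"
      using energy_const_nonneg T quadratic_const_nonneg by simp
  qed (use N lipschitz_const_nonneg solution_lipschitz_at_zero solution_defect T in auto)
  show ?thesis
    using differentiable_at_zero by simp
qed

end
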